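(* Let $q,\hat q$ be exponential factors in distinct Galois orbits, with common part $q_c$ and fission exponent $f_{q,\hat q}$. Then the set of nonzero values among $\mathrm{slope}(\sigma^i(q)-\sigma^j(\hat q))$, $0\le i<\mathrm{ram}(q)$, $0\le j<\mathrm{ram}(\hat q)$, equals $\mathrm{Levels}(q_c)\sqcup\{f_{q,\hat q}\}$. Moreover, if $q,\hat q$ are compatible, then the function $(i,j)\mapsto\mathrm{slope}(\sigma^i(q)-\sigma^j(\hat q))$ on $\mathbb Z\times\mathbb Z$ is determined by $\mathrm{Levels}(q_c)$ and $f_{q,\hat q}$: if $q',\hat q'$ is another compatible pair in distinct orbits with $\mathrm{Levels}(q'_c)=\mathrm{Levels}(q_c)$ and $f_{q',\hat q'}=f_{q,\hat q}$, then $\mathrm{slope}(\sigma^i(q')-\sigma^j(\hat q'))=\mathrm{slope}(\sigma^i(q)-\sigma^j(\hat q))$ for all $i,j\in\mathbb Z$.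
   Context: Exponential factors: finite sums $q=\sum_ka_kx^k$, $a_k\in\mathbb C$, $k\in\mathbb Q_{>0}$; $E(q)$ = set of exponents with $a_k\ne0$; $\mathrm{slope}(q)=\max E(q)$ ($0$ if $q=0$); $\mathrm{ram}(q)$ = least $r\ge1$ with $q\in x^{1/r}\mathbb C[x^{1/r}]$. Galois operator $\sigma(\sum a_kx^k)=\sum a_ke^{-2\pi\sqrt{-1}k}x^k$; the Galois orbit (Stokes circle) $\langle q\rangle=\{\sigma^i(q)\}$ has $\mathrm{ram}(q)$ elements. Truncation $\tau_k(\sum a_{k'}x^{k'})=\sum_{k'\ge k}a_{k'}x^{k'}$. $\mathrm{Levels}(q)=\{\mathrm{slope}(q-\sigma^i(q)):i\in\mathbb Z\}\setminus\{0\}$. Common part and fission exponent: for $q,\hat q$ in distinct Galois orbits, if some $k\in E(q)$ satisfies $\langle\tau_k(q)\rangle=\langle\tau_k(\hat q)\rangle$, let $k$ be the smallest such and set $q_c=\tau_k(q)$, $\hat q_c=\tau_k(\hat q)$; otherwise $q_c=\hat q_c=0$. The fission exponent is $f_{q,\hat q}=\max(\mathrm{slope}(q-q_c),\mathrm{slope}(\hat q-\hat q_c))$. The pair is compatible if $q_c=\hat q_c$. *)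

theory Defs
  imports Complex_Main
begin

text \<open>An exponential factor q = sum a_k x^k is represented by its coefficient
function rat \<Rightarrow> complex (k \<mapsto> a_k), finitely supported on positive rationals.\<close>

definition expfac :: "(rat \<Rightarrow> complex) \<Rightarrow> bool" where
  "expfac q \<longleftrightarrow> finite {k. q k \<noteq> 0} \<and> (\<forall>k. q k \<noteq> 0 \<longrightarrow> k > 0)"

definition E :: "(rat \<Rightarrow> complex) \<Rightarrow> rat set" where
  "E q = {k. q k \<noteq> 0}"

definition slope :: "(rat \<Rightarrow> complex) \<Rightarrow> rat" where
  "slope q = (if E q = {} then 0 else Max (E q))"

definition ram :: "(rat \<Rightarrow> complex) \<Rightarrow> nat" where
  "ram q = (LEAST r::nat. r \<ge> 1 \<and> (\<forall>k\<in>E q. of_nat r * k \<in> \<int>))"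

definition diff :: "(rat \<Rightarrow> complex) \<Rightarrow> (rat \<Rightarrow> complex) \<Rightarrow> (rat \<Rightarrow> complex)" where
  "diff q p = (\<lambda>k. q k - p k)"

definition sigma_pow :: "int \<Rightarrow> (rat \<Rightarrow> complex) \<Rightarrow> (rat \<Rightarrow> complex)" where
  "sigma_pow i q = (\<lambda>k. cis (- 2 * pi * of_rat k * of_int i) * q k)"

definition orbit :: "(rat \<Rightarrow> complex) \<Rightarrow> (rat \<Rightarrow> complex) set" where
  "orbit q = {sigma_pow i q | i. True}"

definition trunc :: "rat \<Rightarrow> (rat \<Rightarrow> complex) \<Rightarrow> (rat \<Rightarrow> complex)" where
  "trunc k q = (\<lambda>k'. if k' \<ge> k then q k' else 0)"

definition Levels :: "(rat \<Rightarrow> complex) \<Rightarrow> rat set" where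
  "Levels q = {slope (diff q (sigma_pow i q)) | i. True} - {0}"

definition has_common :: "(rat \<Rightarrow> complex) \<Rightarrow> (rat \<Rightarrow> complex) \<Rightarrow> bool" where
  "has_common q qh \<longleftrightarrow> (\<exists>k\<in>E q. orbit (trunc k q) = orbit (trunc k qh))"

definition common_exp :: "(rat \<Rightarrow> complex) \<Rightarrow> (rat \<Rightarrow> complex) \<Rightarrow> rat" where
  "common_exp q qh = (LEAST k. k \<in> E q \<and> orbit (trunc k q) = orbit (trunc k qh))"

definition common_part :: "(rat \<Rightarrow> complex) \<Rightarrow> (rat \<Rightarrow> complex) \<Rightarrow> (rat \<Rightarrow> complex)" where
  "common_part q qh = (if has_common q qh then trunc (common_exp q qh) q else (\<lambda>_. 0))"

definition common_part_hat :: "(rat \<Rightarrow> complex) \<Rightarrow> (rat \<Rightarrow> complex) \<Rightarrow> (rat \<Rightarrow> complex)" where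
  "common_part_hat q qh = (if has_common q qh then trunc (common_exp q qh) qh else (\<lambda>_. 0))"

definition fission :: "(rat \<Rightarrow> complex) \<Rightarrow> (rat \<Rightarrow> complex) \<Rightarrow> rat" where
  "fission q qh = max (slope (diff q (common_part q qh))) (slope (diff qh (common_part_hat q qh)))"

definition compatible :: "(rat \<Rightarrow> complex) \<Rightarrow> (rat \<Rightarrow> complex) \<Rightarrow> bool" where
  "compatible q qh \<longleftrightarrow> common_part q qh = common_part_hat q qh"

end

theory Submission
  imports Defs
begin

text \<open>Split \<open>q = q\<^sub>c + r\<close> and \<open>q\<^sub>h = q\<^sub>h\<^sub>c + r\<^sub>h\<close>, where the common parts \<open>q\<^sub>c\<close> and
  \<open>q\<^sub>h\<^sub>c = \<sigma>\<^sup>n q\<^sub>c\<close> live in exponents \<open>\<ge> B\<close> (the common exponent) and the tails \<open>r, r\<^sub>h\<close> below \<open>B\<close>.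
  In \<open>\<sigma>\<^sup>i q - \<sigma>\<^sup>j q\<^sub>h\<close>, if the common parts do not cancel, their difference dominates and its
  slope is a level of \<open>q\<^sub>c\<close>; if they cancel, what remains is \<open>\<sigma>\<^sup>i r - \<sigma>\<^sup>j r\<^sub>h\<close>, whose slope is
  the fission exponent, because cancellation of its leading term would give a common part
  starting below \<open>B\<close>. Since \<open>\<sigma>\<close> acts with period \<open>ram q\<close> on \<open>q\<^sub>c\<close>, every level and the fission
  exponent already occur for \<open>0 \<le> i < ram q\<close>, \<open>j = 0\<close>. For determinacy, the slope of
  \<open>p - \<sigma>\<^sup>m p\<close> is the largest level \<open>L\<close> of \<open>p\<close> with \<open>L m \<notin> \<int>\<close>, hence depends only on \<open>Levels p\<close>.\<close>

lemma sigma_pow_add: "sigma_pow i (sigma_pow j q) = sigma_pow (i + j) q"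
  by (rule ext) (simp add: sigma_pow_def mult.assoc cis_mult ring_distribs)

lemma sigma_pow_0 [simp]: "sigma_pow 0 q = q"
  by (simp add: sigma_pow_def)

lemma sigma_pow_eq_0_iff [simp]: "sigma_pow i q k = 0 \<longleftrightarrow> q k = 0"
  by (simp add: sigma_pow_def)

lemma E_sigma_pow [simp]: "E (sigma_pow i q) = E q"
  by (simp add: E_def)

lemma slope_sigma_pow [simp]: "slope (sigma_pow i q) = slope q"
  by (simp add: slope_def)

lemma sigma_pow_diff: "sigma_pow i (diff p q) = diff (sigma_pow i p) (sigma_pow i q)"
  by (rule ext) (simp add: sigma_pow_def diff_def algebra_simps)

lemma trunc_sigma_pow: "trunc k (sigma_pow i q) = sigma_pow i (trunc k q)"
  by (rule ext) (simp add: trunc_def sigma_pow_def)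

lemma orbit_sigma_pow [simp]: "orbit (sigma_pow n p) = orbit p"
  unfolding orbit_def by (metis sigma_pow_add diff_add_cancel)

lemma sigma_pow_in_orbit: "sigma_pow n p \<in> orbit p"
  by (auto simp: orbit_def)

lemma orbit_eq_imp_sigma_pow: "orbit p = orbit q \<Longrightarrow> \<exists>n. q = sigma_pow n p"
  using sigma_pow_in_orbit[of 0 q] by (auto simp: orbit_def)

lemma diff_eq_0_iff: "diff p q = (\<lambda>_. 0) \<longleftrightarrow> p = q"
  by (auto simp: diff_def fun_eq_iff)

lemma of_rat_in_Ints_iff: "(of_rat x :: real) \<in> \<int> \<longleftrightarrow> x \<in> \<int>"
proof
  assume "(of_rat x :: real) \<in> \<int>"
  then obtain z where "(of_rat x :: real) = of_int z" by (auto elim: Ints_cases)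
  then have "x = of_int z" by (metis of_rat_eq_iff of_rat_of_int_eq)
  then show "x \<in> \<int>" by simp
qed (auto elim: Ints_cases)

lemma cis_eq_1_iff: "cis (- 2 * pi * of_rat x) = 1 \<longleftrightarrow> x \<in> \<int>"
proof
  assume "cis (- 2 * pi * of_rat x) = 1"
  then have "cos (- 2 * pi * of_rat x) = 1" by (metis cis.sel(1) one_complex.sel(1))
  then obtain n :: int where "- 2 * pi * of_rat x = of_int n * 2 * pi"
    using cos_one_2pi_int by blast
  then have "pi * (of_rat x + of_int n) = 0" by (simp add: algebra_simps)
  then have "(of_rat x :: real) = of_int (- n)" by (simp add: eq_neg_iff_add_eq_0)
  then show "x \<in> \<int>" by (metis Ints_of_int of_rat_in_Ints_iff)
next
  assume "x \<in> \<int>"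
  then have "(of_rat (- x) :: real) \<in> \<int>" by (simp add: of_rat_in_Ints_iff)
  from cis_multiple_2pi[OF this] show "cis (- 2 * pi * of_rat x) = 1" by (simp add: of_rat_minus)
qed

lemma diff_sigma_pow_self_eq_0_iff:
  "diff p (sigma_pow m p) k = 0 \<longleftrightarrow> p k = 0 \<or> k * of_int m \<in> \<int>"
proof -
  have "diff p (sigma_pow m p) k = (1 - cis (- 2 * pi * of_rat (k * of_int m))) * p k"
    by (simp add: diff_def sigma_pow_def of_rat_mult algebra_simps)
  then show ?thesis using cis_eq_1_iff[of "k * of_int m"] by auto
qed

lemma sigma_pow_eq_self_iff: "sigma_pow m p = p \<longleftrightarrow> (\<forall>k\<in>E p. k * of_int m \<in> \<int>)"
proof -
  have "sigma_pow m p = p \<longleftrightarrow> (\<forall>k. diff p (sigma_pow m p) k = 0)"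
    by (metis diff_eq_0_iff)
  then show ?thesis by (auto simp: diff_sigma_pow_self_eq_0_iff E_def)
qed

lemma expfac_iff_E: "expfac p \<longleftrightarrow> finite (E p) \<and> (\<forall>k\<in>E p. 0 < k)"
  by (simp add: expfac_def E_def)

lemma finite_E: "expfac p \<Longrightarrow> finite (E p)"
  by (simp add: expfac_iff_E)

lemma expfac_pos: "expfac p \<Longrightarrow> p k \<noteq> 0 \<Longrightarrow> 0 < k"
  by (simp add: expfac_def)

lemma expfac_subset: "expfac p \<Longrightarrow> E q \<subseteq> E p \<Longrightarrow> expfac q"
  by (auto simp: expfac_iff_E finite_subset)

lemma expfac_sigma_pow: "expfac p \<Longrightarrow> expfac (sigma_pow i p)"
  by (simp add: expfac_iff_E)

lemma expfac_diff: "expfac p \<Longrightarrow> expfac q \<Longrightarrow> expfac (diff p q)"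
proof -
  assume "expfac p" "expfac q"
  moreover have "E (diff p q) \<subseteq> E p \<union> E q" by (auto simp: E_def diff_def)
  ultimately show ?thesis by (auto simp: expfac_iff_E finite_subset)
qed

lemma expfac_diff_sigma_pow: "expfac a \<Longrightarrow> expfac b \<Longrightarrow> expfac (diff (sigma_pow i a) (sigma_pow j b))"
  by (simp add: expfac_diff expfac_sigma_pow)

lemma ram_exists: "finite (E q) \<Longrightarrow> \<exists>r::nat. 1 \<le> r \<and> (\<forall>k\<in>E q. of_nat r * k \<in> \<int>)"
proof -
  assume fin: "finite (E q)"
  define den where "den k = nat (snd (quotient_of k))" for k
  have den_pos: "0 < den k" for k
    using quotient_of_denom_pos'[of k] by (simp add: den_def)
  have "of_nat (den k) * k \<in> \<int>" for k
  proof -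
    obtain a b where ab: "quotient_of k = (a, b)" by fastforce
    then have "of_nat (den k) * k = of_int a"
      using quotient_of_denom_pos[OF ab] quotient_of_div[OF ab] by (simp add: den_def)
    then show ?thesis by simp
  qed
  moreover have "of_nat (\<Prod>k\<in>E q. den k) * k \<in> \<int>" if k: "k \<in> E q" for k
  proof -
    obtain c where c: "(\<Prod>k\<in>E q. den k) = den k * c"
      using dvd_prodI[OF fin k] by (rule dvdE)
    have "of_nat c * (of_nat (den k) * k) \<in> \<int>"
      using \<open>of_nat (den k) * k \<in> \<int>\<close> by simp
    then show ?thesis unfolding c by (simp add: ac_simps)
  qed
  moreover have "1 \<le> (\<Prod>k\<in>E q. den k)"
    using den_pos by (simp add: Suc_le_eq prod_pos)
  ultimately show ?thesis by blast
qed

lemma ram_spec: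
  assumes "expfac q"
  shows "1 \<le> ram q \<and> (\<forall>k\<in>E q. of_nat (ram q) * k \<in> \<int>)"
  unfolding ram_def by (rule LeastI_ex) (rule ram_exists[OF finite_E[OF assms]])

lemma sigma_pow_cong_mod_ram:
  assumes "expfac q" and "E p \<subseteq> E q" and "a mod int (ram q) = b mod int (ram q)"
  shows "sigma_pow a p = sigma_pow b p"
proof -
  obtain t where "a - b = int (ram q) * t"
    using assms(3) by (auto simp: mod_eq_dvd_iff elim: dvdE)
  then have t: "a = b + int (ram q) * t" by simp
  have "k * of_int (int (ram q) * t) \<in> \<int>" if "k \<in> E p" for k
  proof -
    have "of_nat (ram q) * k \<in> \<int>" using ram_spec[OF assms(1)] assms(2) that by blast
    then have "(of_nat (ram q) * k) * of_int t \<in> \<int>" by simp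
    then show ?thesis by (simp add: ac_simps)
  qed
  then have "sigma_pow (int (ram q) * t) p = p" by (simp add: sigma_pow_eq_self_iff)
  then show ?thesis by (metis t sigma_pow_add add.commute)
qed

lemma le_slope: "finite (E p) \<Longrightarrow> p k \<noteq> 0 \<Longrightarrow> k \<le> slope p"
  by (auto simp: slope_def E_def)

lemma coeff_above_slope: "finite (E p) \<Longrightarrow> slope p < k \<Longrightarrow> p k = 0"
  by (meson le_slope not_le)

lemma slope_coeff_nonzero:
  assumes "finite (E p)" and "p \<noteq> (\<lambda>_. 0)"
  shows "p (slope p) \<noteq> 0"
proof -
  have "E p \<noteq> {}" using assms(2) by (auto simp: E_def)
  then have "slope p \<in> E p" using Max_in[OF assms(1)] by (simp add: slope_def)
  then show ?thesis by (simp add: E_def)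
qed

lemma slope_zero_fun [simp]: "slope (\<lambda>_. 0) = 0"
  by (simp add: slope_def E_def)

lemma slope_eq_0_iff:
  assumes "expfac p"
  shows "slope p = 0 \<longleftrightarrow> p = (\<lambda>_. 0)"
proof
  assume "slope p = 0"
  then show "p = (\<lambda>_. 0)"
    using slope_coeff_nonzero[OF finite_E[OF assms]] expfac_pos[OF assms] by fastforce
qed simp

lemma slope_nonneg:
  assumes "expfac p"
  shows "0 \<le> slope p"
proof (cases "p = (\<lambda>_. 0)")
  case False
  then show ?thesis
    using expfac_pos[OF assms] slope_coeff_nonzero[OF finite_E[OF assms]] by (simp add: less_imp_le)
qed simp

lemma slope_eqI:
  assumes "finite (E p)" "p s \<noteq> 0" "\<And>k. s < k \<Longrightarrow> p k = 0"
  shows "slope p = s"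
proof -
  have "p (slope p) \<noteq> 0" using assms(2) slope_coeff_nonzero[OF assms(1)] by fastforce
  then have "\<not> s < slope p" using assms(3) by blast
  then show ?thesis using le_slope[OF assms(1,2)] by simp
qed

lemma slope_less:
  assumes "finite (E p)" "0 < B" "\<And>k. B \<le> k \<Longrightarrow> p k = 0"
  shows "slope p < B"
proof (cases "p = (\<lambda>_. 0)")
  case False
  then show ?thesis using slope_coeff_nonzero[OF assms(1)] assms(3) not_less by blast
qed (simp add: assms(2))

lemma slope_add_dominated:
  assumes "finite (E a)" "finite (E b)" "a \<noteq> (\<lambda>_. 0)"
    and "\<And>k. a k \<noteq> 0 \<Longrightarrow> B \<le> k" and "\<And>k. B \<le> k \<Longrightarrow> b k = 0"
  shows "slope (\<lambda>k. a k + b k) = slope a"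
proof (rule slope_eqI)
  have "E (\<lambda>k. a k + b k) \<subseteq> E a \<union> E b" by (auto simp: E_def)
  then show "finite (E (\<lambda>k. a k + b k))" using assms(1,2) by (simp add: finite_subset)
  have "a (slope a) \<noteq> 0" by (rule slope_coeff_nonzero[OF assms(1,3)])
  with assms(4,5) show "a (slope a) + b (slope a) \<noteq> 0" by simp
  fix k assume "slope a < k"
  with assms(4,5) \<open>a (slope a) \<noteq> 0\<close> coeff_above_slope[OF assms(1)]
  show "a k + b k = 0" by fastforce
qed

lemma Levels_coeff_nonzero: "expfac p \<Longrightarrow> L \<in> Levels p \<Longrightarrow> p L \<noteq> 0"
proof -
  assume "expfac p" "L \<in> Levels p"
  then obtain m where L: "L = slope (diff p (sigma_pow m p))" "L \<noteq> 0"
    by (auto simp: Levels_def)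
  have "finite (E (diff p (sigma_pow m p)))"
    using \<open>expfac p\<close> by (simp add: finite_E expfac_diff expfac_sigma_pow)
  moreover have "diff p (sigma_pow m p) \<noteq> (\<lambda>_. 0)" using L by auto
  ultimately have "diff p (sigma_pow m p) L \<noteq> 0" using L(1) slope_coeff_nonzero by blast
  then show "p L \<noteq> 0" by (simp add: diff_sigma_pow_self_eq_0_iff)
qed

lemma slope_diff_sigma_pow_self:
  fixes m :: int
  assumes "expfac p"
  defines "S \<equiv> {L \<in> Levels p. L * of_int m \<notin> \<int>}"
  shows "slope (diff p (sigma_pow m p)) = (if S = {} then 0 else Max S)"
proof -
  let ?d = "diff p (sigma_pow m p)"
  have fin_d: "finite (E ?d)" using assms(1) by (simp add: finite_E expfac_diff expfac_sigma_pow)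
  have d_nonzero: "?d L \<noteq> 0" if "L \<in> S" for L
    using that Levels_coeff_nonzero[OF assms(1)] by (auto simp: S_def diff_sigma_pow_self_eq_0_iff)
  have "S \<subseteq> E p" using Levels_coeff_nonzero[OF assms(1)] by (auto simp: S_def E_def)
  then have "finite S" using finite_E[OF assms(1)] by (rule finite_subset)
  show ?thesis
  proof (cases "?d = (\<lambda>_. 0)")
    case True
    then show ?thesis using d_nonzero by fastforce
  next
    case False
    then have top: "?d (slope ?d) \<noteq> 0" by (rule slope_coeff_nonzero[OF fin_d])
    then have "slope ?d \<in> S"
      using False slope_eq_0_iff[of ?d] assms(1)
      by (auto simp: S_def Levels_def diff_sigma_pow_self_eq_0_iff expfac_diff expfac_sigma_pow)
    moreover have "L \<le> slope ?d" if "L \<in> S" for L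
      using le_slope[OF fin_d d_nonzero[OF that]] .
    ultimately show ?thesis using \<open>finite S\<close> by (auto intro: Max_eqI[symmetric])
  qed
qed

lemma orbit_trunc_eqI:
  assumes "\<And>k. s \<le> k \<Longrightarrow> sigma_pow i a k = sigma_pow j b k"
  shows "orbit (trunc s a) = orbit (trunc s b)"
proof -
  have "trunc s (sigma_pow i a) = trunc s (sigma_pow j b)"
    using assms by (auto simp: trunc_def)
  then have "sigma_pow i (trunc s a) = sigma_pow j (trunc s b)" by (simp add: trunc_sigma_pow)
  then show ?thesis by (metis orbit_sigma_pow)
qed

lemma diff_sigma_pow_eq_0I: "a k = 0 \<Longrightarrow> b k = 0 \<Longrightarrow> diff (sigma_pow i a) (sigma_pow j b) k = 0"
  by (simp add: diff_def sigma_pow_def)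

lemma diff_sigma_pow_split:
  "diff (sigma_pow i a) (sigma_pow j b) k
     = diff (sigma_pow i c) (sigma_pow j d) k + diff (sigma_pow i (diff a c)) (sigma_pow j (diff b d)) k"
  by (simp add: diff_def sigma_pow_def algebra_simps)

text \<open>\<open>B\<close> is the exponent at which the common part starts (any bound above both slopes if there
  is no common part); \<open>q\<close> and \<open>qh\<close> agree with their common parts from \<open>B\<close> on.\<close>
locale split_pair =
  fixes q qh :: "rat \<Rightarrow> complex" and n :: int and B :: rat
  assumes expfac_q: "expfac q" and expfac_qh: "expfac qh"
    and distinct_orbits: "orbit q \<noteq> orbit qh"
    and common_part_hat_eq: "common_part_hat q qh = sigma_pow n (common_part q qh)"
    and B_pos: "0 < B"
    and common_part_support: "common_part q qh k \<noteq> 0 \<Longrightarrow> B \<le> k"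
    and q_eq_common_part: "B \<le> k \<Longrightarrow> q k = common_part q qh k"
    and qh_eq_common_part_hat: "B \<le> k \<Longrightarrow> qh k = common_part_hat q qh k"
    and orbit_trunc_below: "k < B \<Longrightarrow> k \<in> E q \<Longrightarrow> orbit (trunc k q) \<noteq> orbit (trunc k qh)"
begin

abbreviation "qc \<equiv> common_part q qh"
abbreviation "qhc \<equiv> common_part_hat q qh"
abbreviation "qt \<equiv> diff q qc"
abbreviation "qht \<equiv> diff qh qhc"

lemma E_common_part_subset: "E qc \<subseteq> E q"
  using common_part_support q_eq_common_part by (auto simp: E_def)

lemma expfac_common_part: "expfac qc"
  using expfac_q E_common_part_subset by (rule expfac_subset)

lemma expfac_common_part_hat: "expfac qhc"
  by (simp add: common_part_hat_eq expfac_common_part expfac_sigma_pow)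

lemma expfac_tail: "expfac qt"
  by (simp add: expfac_diff expfac_q expfac_common_part)

lemma expfac_tail_hat: "expfac qht"
  by (simp add: expfac_diff expfac_qh expfac_common_part_hat)

lemma common_part_hat_support: "qhc k \<noteq> 0 \<Longrightarrow> B \<le> k"
  by (simp add: common_part_hat_eq common_part_support)

lemma tail_vanishes: "B \<le> k \<Longrightarrow> qt k = 0"
  by (simp add: diff_def q_eq_common_part)

lemma tail_hat_vanishes: "B \<le> k \<Longrightarrow> qht k = 0"
  by (simp add: diff_def qh_eq_common_part_hat)

lemma fission_eq: "fission q qh = max (slope qt) (slope qht)"
  by (simp add: fission_def)

lemma fission_pos: "0 < fission q qh"
proof (rule ccontr)
  assume "\<not> 0 < fission q qh"
  then have "slope qt = 0" "slope qht = 0"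
    using slope_nonneg[OF expfac_tail] slope_nonneg[OF expfac_tail_hat] by (auto simp: fission_eq)
  then have "q = qc" "qh = qhc"
    using slope_eq_0_iff[OF expfac_tail] slope_eq_0_iff[OF expfac_tail_hat] by (simp_all add: diff_eq_0_iff)
  then have "orbit q = orbit qh" by (simp add: common_part_hat_eq)
  then show False using distinct_orbits by contradiction
qed

lemma fission_less_B: "fission q qh < B"
proof -
  have "slope qt < B"
    using finite_E[OF expfac_tail] B_pos by (rule slope_less) (rule tail_vanishes)
  moreover have "slope qht < B"
    using finite_E[OF expfac_tail_hat] B_pos by (rule slope_less) (rule tail_hat_vanishes)
  ultimately show ?thesis by (simp add: fission_eq)
qed

lemma fission_less_Levels: "L \<in> Levels qc \<Longrightarrow> fission q qh < L"
  using Levels_coeff_nonzero[OF expfac_common_part] common_part_support fission_less_B by fastforce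

text \<open>If the common parts cancel, the slope comes from the tails; it cannot drop below the
  fission exponent, since cancellation at that exponent would give a common part starting
  below \<open>B\<close>.\<close>
lemma slope_diff_sigma_pow_common:
  assumes common: "sigma_pow i qc = sigma_pow j qhc"
  shows "slope (diff (sigma_pow i q) (sigma_pow j qh)) = fission q qh"
proof -
  let ?F = "fission q qh"
  define d where "d = diff (sigma_pow i qt) (sigma_pow j qht)"
  have d_eq: "diff (sigma_pow i q) (sigma_pow j qh) = d"
  proof
    fix k
    have "diff (sigma_pow i qc) (sigma_pow j qhc) k = 0" using common by (simp add: diff_def)
    then show "diff (sigma_pow i q) (sigma_pow j qh) k = d k"
      using diff_sigma_pow_split[of i q j qh k qc qhc] by (simp add: d_def)
  qed
  have above: "d k = 0" if "?F < k" for k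
    unfolding d_def using that
    by (intro diff_sigma_pow_eq_0I coeff_above_slope finite_E expfac_tail expfac_tail_hat)
      (simp_all add: fission_eq)
  have at: "d ?F \<noteq> 0"
  proof (cases "slope qt < slope qht")
    case True
    then have F: "?F = slope qht" by (simp add: fission_eq)
    have "qht \<noteq> (\<lambda>_. 0)" using True slope_nonneg[OF expfac_tail] by auto
    then have "qht ?F \<noteq> 0" unfolding F by (rule slope_coeff_nonzero[OF finite_E[OF expfac_tail_hat]])
    moreover have "qt ?F = 0" using True F coeff_above_slope[OF finite_E[OF expfac_tail]] by simp
    ultimately show ?thesis by (simp add: d_def diff_def sigma_pow_def)
  next
    case False
    then have F: "?F = slope qt" by (simp add: fission_eq)
    then have "qt \<noteq> (\<lambda>_. 0)" using fission_pos by auto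
    then have qt_F: "qt ?F \<noteq> 0" unfolding F by (rule slope_coeff_nonzero[OF finite_E[OF expfac_tail]])
    have "qc ?F = 0" using fission_less_B common_part_support by fastforce
    then have "?F \<in> E q" using qt_F by (simp add: E_def diff_def)
    then have distinct: "orbit (trunc ?F q) \<noteq> orbit (trunc ?F qh)"
      using orbit_trunc_below fission_less_B by blast
    show ?thesis
    proof
      assume "d ?F = 0"
      then have "d k = 0" if "?F \<le> k" for k using that above by (cases "k = ?F") auto
      then have "orbit (trunc ?F q) = orbit (trunc ?F qh)"
        using d_eq by (intro orbit_trunc_eqI[of _ i _ j]) (metis diff_def eq_iff_diff_eq_0)
      then show False using distinct by contradiction
    qed
  qed
  have "finite (E d)" by (simp add: d_def finite_E expfac_diff_sigma_pow expfac_tail expfac_tail_hat)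
  then show ?thesis using slope_eqI at above d_eq by simp
qed

text \<open>Otherwise the difference of the common parts, supported at or above \<open>B\<close>, dominates.\<close>
lemma slope_diff_sigma_pow_distinct:
  assumes distinct: "sigma_pow i qc \<noteq> sigma_pow j qhc"
  shows "slope (diff (sigma_pow i q) (sigma_pow j qh)) = slope (diff (sigma_pow i qc) (sigma_pow j qhc))"
proof -
  let ?D = "diff (sigma_pow i qc) (sigma_pow j qhc)"
  let ?d = "diff (sigma_pow i qt) (sigma_pow j qht)"
  have split: "diff (sigma_pow i q) (sigma_pow j qh) = (\<lambda>k. ?D k + ?d k)"
    by (rule ext) (rule diff_sigma_pow_split)
  have "slope (\<lambda>k. ?D k + ?d k) = slope ?D"
  proof (rule slope_add_dominated)
    show "finite (E ?D)" "finite (E ?d)"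
      by (simp_all add: finite_E expfac_diff_sigma_pow expfac_common_part expfac_common_part_hat
          expfac_tail expfac_tail_hat)
    show "?D \<noteq> (\<lambda>_. 0)" unfolding diff_eq_0_iff by (rule distinct)
    show "B \<le> k" if "?D k \<noteq> 0" for k
    proof -
      have "qc k \<noteq> 0 \<or> qhc k \<noteq> 0" using that diff_sigma_pow_eq_0I by blast
      then show ?thesis using common_part_support common_part_hat_support by blast
    qed
    show "?d k = 0" if "B \<le> k" for k
      using tail_vanishes[OF that] tail_hat_vanishes[OF that] by (rule diff_sigma_pow_eq_0I)
  qed
  then show ?thesis by (simp only: split)
qed

lemma slope_diff_sigma_pow:
  "slope (diff (sigma_pow i q) (sigma_pow j qh)) =
     (if slope (diff qc (sigma_pow (j - i) qhc)) = 0 then fission q qh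
      else slope (diff qc (sigma_pow (j - i) qhc)))"
proof -
  have shift: "diff (sigma_pow i qc) (sigma_pow j qhc) = sigma_pow i (diff qc (sigma_pow (j - i) qhc))"
    by (simp add: sigma_pow_diff sigma_pow_add)
  have "expfac (diff (sigma_pow i qc) (sigma_pow j qhc))"
    by (simp add: expfac_diff_sigma_pow expfac_common_part expfac_common_part_hat)
  then have "slope (diff (sigma_pow i qc) (sigma_pow j qhc)) = 0 \<longleftrightarrow> sigma_pow i qc = sigma_pow j qhc"
    by (simp add: slope_eq_0_iff diff_eq_0_iff)
  moreover have "slope (diff qc (sigma_pow (j - i) qhc)) = slope (diff (sigma_pow i qc) (sigma_pow j qhc))"
    by (simp add: shift)
  ultimately show ?thesis
    using slope_diff_sigma_pow_common slope_diff_sigma_pow_distinct by auto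
qed

lemma slopes_eq_Levels_fission:
  "{slope (diff (sigma_pow i q) (sigma_pow j qh)) | i j.
      0 \<le> i \<and> i < int (ram q) \<and> 0 \<le> j \<and> j < int (ram qh)} - {0} = Levels qc \<union> {fission q qh}"
proof -
  define g where "g m = (if slope (diff qc (sigma_pow m qc)) = 0 then fission q qh
                         else slope (diff qc (sigma_pow m qc)))" for m
  have slope_eq_g: "slope (diff (sigma_pow i q) (sigma_pow j qh)) = g (j - i + n)" for i j
    by (simp add: slope_diff_sigma_pow g_def common_part_hat_eq sigma_pow_add)
  have g_mod: "g (m mod int (ram q)) = g m" for m
    using sigma_pow_cong_mod_ram[OF expfac_q E_common_part_subset, of "m mod int (ram q)" m]
    by (simp add: g_def)
  have range_g: "range g = Levels qc \<union> {fission q qh}"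
  proof
    show "range g \<subseteq> Levels qc \<union> {fission q qh}" by (auto simp: g_def Levels_def)
    have "fission q qh = g 0" by (simp add: g_def diff_def)
    moreover have "L = g m" if "L = slope (diff qc (sigma_pow m qc))" "L \<noteq> 0" for L m
      using that by (simp add: g_def)
    ultimately show "Levels qc \<union> {fission q qh} \<subseteq> range g" by (auto simp: Levels_def)
  qed
  have ram_pos: "0 < int (ram q)" "0 < int (ram qh)"
    using ram_spec[OF expfac_q] ram_spec[OF expfac_qh] by auto
  have "g m \<in> {slope (diff (sigma_pow i q) (sigma_pow j qh)) | i j.
      0 \<le> i \<and> i < int (ram q) \<and> 0 \<le> j \<and> j < int (ram qh)}" for m
  proof -
    let ?i = "(n - m) mod int (ram q)"
    have "(0 - ?i + n) mod int (ram q) = m mod int (ram q)" by (simp add: mod_diff_right_eq)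
    then have "g m = slope (diff (sigma_pow ?i q) (sigma_pow 0 qh))" by (metis g_mod slope_eq_g)
    then show ?thesis using ram_pos by fastforce
  qed
  then have "{slope (diff (sigma_pow i q) (sigma_pow j qh)) | i j.
      0 \<le> i \<and> i < int (ram q) \<and> 0 \<le> j \<and> j < int (ram qh)} = Levels qc \<union> {fission q qh}"
    unfolding range_g[symmetric] by (auto simp: slope_eq_g)
  moreover have "0 \<notin> Levels qc \<union> {fission q qh}"
    using fission_pos by (simp add: Levels_def)
  ultimately show ?thesis by blast
qed

end

lemma split_pair_exists:
  assumes "expfac q" and "expfac qh" and "orbit q \<noteq> orbit qh"
  obtains n B where "split_pair q qh n B"
proof (cases "has_common q qh")
  case True
  define S where "S = {k \<in> E q. orbit (trunc k q) = orbit (trunc k qh)}"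
  have "finite S" "S \<noteq> {}"
    using True finite_E[OF assms(1)] by (auto simp: S_def has_common_def)
  define B where "B = Min S"
  have "B \<in> S" and B_min: "\<And>k. k \<in> S \<Longrightarrow> B \<le> k"
    using \<open>finite S\<close> \<open>S \<noteq> {}\<close> by (simp_all add: B_def)
  then have "common_exp q qh = B"
    unfolding common_exp_def by (intro Least_equality) (auto simp: S_def)
  then have qc: "common_part q qh = trunc B q" and qhc: "common_part_hat q qh = trunc B qh"
    using True by (simp_all add: common_part_def common_part_hat_def)
  have "orbit (trunc B q) = orbit (trunc B qh)" using \<open>B \<in> S\<close> by (simp add: S_def)
  then obtain n where n: "trunc B qh = sigma_pow n (trunc B q)"
    using orbit_eq_imp_sigma_pow by blast
  have "split_pair q qh n B"
  proof
    show "0 < B" using \<open>B \<in> S\<close> expfac_pos[OF assms(1)] by (auto simp: S_def E_def)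
    show "k < B \<Longrightarrow> k \<in> E q \<Longrightarrow> orbit (trunc k q) \<noteq> orbit (trunc k qh)" for k
      using B_min by (force simp: S_def)
    show "common_part_hat q qh = sigma_pow n (common_part q qh)" by (simp add: qc qhc n)
    show "B \<le> k" if "common_part q qh k \<noteq> 0" for k
      using that by (simp add: qc trunc_def split: if_splits)
    show "q k = common_part q qh k" if "B \<le> k" for k using that by (simp add: qc trunc_def)
    show "qh k = common_part_hat q qh k" if "B \<le> k" for k using that by (simp add: qhc trunc_def)
  qed (fact assms)+
  then show ?thesis by (rule that)
next
  case False
  then have qc: "common_part q qh = (\<lambda>_. 0)" and qhc: "common_part_hat q qh = (\<lambda>_. 0)"
    by (simp_all add: common_part_def common_part_hat_def)
  define B where "B = max (slope q) (slope qh) + 1"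
  have "split_pair q qh 0 B"
  proof
    show "0 < B" using slope_nonneg[OF assms(1)] by (simp add: B_def)
    show "q k = common_part q qh k" if "B \<le> k" for k
      using that coeff_above_slope[OF finite_E[OF assms(1)], of k] by (simp add: qc B_def)
    show "qh k = common_part_hat q qh k" if "B \<le> k" for k
      using that coeff_above_slope[OF finite_E[OF assms(2)], of k] by (simp add: qhc B_def)
    show "k < B \<Longrightarrow> k \<in> E q \<Longrightarrow> orbit (trunc k q) \<noteq> orbit (trunc k qh)" for k
      using False by (auto simp: has_common_def)
  qed (use assms in \<open>simp_all add: qc qhc\<close>)
  then show ?thesis by (rule that)
qed

lemma slope_diff_sigma_pow_compatible_eq:
  assumes "expfac q" "expfac qh" "orbit q \<noteq> orbit qh" "compatible q qh"
    and "expfac q'" "expfac qh'" "orbit q' \<noteq> orbit qh'" "compatible q' qh'"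
    and levels: "Levels (common_part q' qh') = Levels (common_part q qh)"
    and fission: "fission q' qh' = fission q qh"
  shows "slope (diff (sigma_pow i q') (sigma_pow j qh')) = slope (diff (sigma_pow i q) (sigma_pow j qh))"
proof -
  obtain n B where P: "split_pair q qh n B" using split_pair_exists assms(1-3) .
  obtain n' B' where P': "split_pair q' qh' n' B'" using split_pair_exists assms(5-7) .
  have hat: "common_part_hat q qh = common_part q qh" "common_part_hat q' qh' = common_part q' qh'"
    using assms(4,8) by (simp_all add: compatible_def)
  have "slope (diff (common_part q' qh') (sigma_pow (j - i) (common_part q' qh')))
      = slope (diff (common_part q qh) (sigma_pow (j - i) (common_part q qh)))"
    using levels by (simp only: slope_diff_sigma_pow_self split_pair.expfac_common_part[OF P]
        split_pair.expfac_common_part[OF P'])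
  then show ?thesis
    using fission by (simp add: split_pair.slope_diff_sigma_pow[OF P] split_pair.slope_diff_sigma_pow[OF P'] hat)
qed

theorem mainTheorem4:
  assumes "expfac q" and "expfac qh" and "orbit q \<noteq> orbit qh"
  shows "{slope (diff (sigma_pow i q) (sigma_pow j qh)) | i j.
            0 \<le> i \<and> i < int (ram q) \<and> 0 \<le> j \<and> j < int (ram qh)} - {0}
           = Levels (common_part q qh) \<union> {fission q qh}
         \<and> fission q qh \<notin> Levels (common_part q qh)
         \<and> (compatible q qh \<longrightarrow>
              (\<forall>q' qh'. expfac q' \<and> expfac qh' \<and> orbit q' \<noteq> orbit qh' \<and> compatible q' qh'
                 \<and> Levels (common_part q' qh') = Levels (common_part q qh)
                 \<and> fission q' qh' = fission q qh
                 \<longrightarrow> (\<forall>i j. slope (diff (sigma_pow i q') (sigma_pow j qh'))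
                          = slope (diff (sigma_pow i q) (sigma_pow j qh)))))"
proof -
  obtain n B where P: "split_pair q qh n B" using split_pair_exists[OF assms] .
  show ?thesis
  proof (intro conjI impI allI)
    show "fission q qh \<notin> Levels (common_part q qh)"
      using split_pair.fission_less_Levels[OF P] by blast
    fix q' qh' i j
    assume "compatible q qh" and "expfac q' \<and> expfac qh' \<and> orbit q' \<noteq> orbit qh' \<and> compatible q' qh'
      \<and> Levels (common_part q' qh') = Levels (common_part q qh) \<and> fission q' qh' = fission q qh"
    then show "slope (diff (sigma_pow i q') (sigma_pow j qh')) = slope (diff (sigma_pow i q) (sigma_pow j qh))"
      using assms by (intro slope_diff_sigma_pow_compatible_eq) simp_all
  qed (rule split_pair.slopes_eq_Levels_fission[OF P])
qed

end
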